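(* For any rational number $t>1/2$, there exist no minimally $t$-tough split graphs.
   Context: All graphs are finite, simple and undirected. A graph is split if its vertex set can be partitioned into a clique and an independent set. $\omega(H)$ denotes the number of components of $H$. A cutset of $G$ is a vertex set $S$ with $G-S$ disconnected. For positive real $t$, $G$ is $t$-tough if $\omega(G-S)\le |S|/t$ for every cutset $S$; the toughness $\tau(G)$ is the largest such $t$, with $\tau(K_n)=\infty$ for all $n\ge1$. $G$ is minimally $t$-tough if $\tau(G)=t$ and $\tau(G-e)<t$ for every edge $e$ of $G$. *)

theory Defs
  imports Complex_Main "HOL-Library.Extended_Real"
begin

definition graph :: "'a set \<Rightarrow> 'a set set \<Rightarrow> bool" where
  "graph V E \<longleftrightarrow> finite V \<and> (\<forall>e\<in>E. \<exists>u v. e = {u, v} \<and> u \<noteq> v \<and> u \<in> V \<and> v \<in> V)"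

definition adj :: "'a set set \<Rightarrow> 'a \<Rightarrow> 'a \<Rightarrow> bool" where
  "adj E u v \<longleftrightarrow> {u, v} \<in> E \<and> u \<noteq> v"

definition conn_rel :: "'a set \<Rightarrow> 'a set set \<Rightarrow> ('a \<times> 'a) set" where
  "conn_rel V E = ({(u, v). u \<in> V \<and> v \<in> V \<and> adj E u v})\<^sup>* \<inter> (V \<times> V)"

definition ncomp :: "'a set \<Rightarrow> 'a set set \<Rightarrow> nat" where
  "ncomp V E = card (V // conn_rel V E)"

definition del_verts_V :: "'a set \<Rightarrow> 'a set \<Rightarrow> 'a set" where
  "del_verts_V V S = V - S"

definition del_verts_E :: "'a set set \<Rightarrow> 'a set \<Rightarrow> 'a set set" where
  "del_verts_E E S = {e \<in> E. e \<inter> S = {}}"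

definition cutset :: "'a set \<Rightarrow> 'a set set \<Rightarrow> 'a set \<Rightarrow> bool" where
  "cutset V E S \<longleftrightarrow> S \<subseteq> V \<and> ncomp (del_verts_V V S) (del_verts_E E S) \<ge> 2"

definition tough :: "real \<Rightarrow> 'a set \<Rightarrow> 'a set set \<Rightarrow> bool" where
  "tough t V E \<longleftrightarrow> (\<forall>S. cutset V E S \<longrightarrow>
      real (ncomp (del_verts_V V S) (del_verts_E E S)) \<le> real (card S) / t)"

text \<open>Toughness: the largest t such that G is t-tough, i.e. the minimum of
|S|/omega(G-S) over all cutsets S; infinity if there is no cutset (complete graphs).\<close>
definition toughness :: "'a set \<Rightarrow> 'a set set \<Rightarrow> ereal" where
  "toughness V E = (if \<exists>S. cutset V E S
     then ereal (Min {real (card S) / real (ncomp (del_verts_V V S) (del_verts_E E S)) | S. cutset V E S})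
     else \<infinity>)"

definition minimally_tough :: "real \<Rightarrow> 'a set \<Rightarrow> 'a set set \<Rightarrow> bool" where
  "minimally_tough t V E \<longleftrightarrow> toughness V E = ereal t \<and> (\<forall>e\<in>E. toughness V (E - {e}) < ereal t)"

definition clique :: "'a set set \<Rightarrow> 'a set \<Rightarrow> bool" where
  "clique E K \<longleftrightarrow> (\<forall>u\<in>K. \<forall>v\<in>K. u \<noteq> v \<longrightarrow> {u, v} \<in> E)"

definition independent :: "'a set set \<Rightarrow> 'a set \<Rightarrow> bool" where
  "independent E I \<longleftrightarrow> (\<forall>u\<in>I. \<forall>v\<in>I. {u, v} \<notin> E)"

definition split_graph :: "'a set \<Rightarrow> 'a set set \<Rightarrow> bool" where
  "split_graph V E \<longleftrightarrow> (\<exists>K I. K \<union> I = V \<and> K \<inter> I = {} \<and> clique E K \<and> independent E I)"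

end

theory Submission
  imports Defs
begin

text \<open>Let G be minimally t-tough with clique K and independent set I. Some x \<in> I has a
non-neighbour, so its neighbourhood M \<subseteq> K is a cutset and |M| \<ge> 2t, hence |M| \<ge> 2.
For distinct u, w \<in> M, the cutset S witnessing that G - uw is less than t-tough must separate
u from w; then K - {u,w} and every common neighbour of u and w (in particular x) lie in S.
Comparing |S| with the cutsets K - {w} and K of G shows that I \<inter> S = {x}, that x is the only
neighbour of u in I, and that |K| - 1 < t (|I| + 1). Then K - M isolates every vertex of
I - {x}, so t |I| \<le> |K| - |M|, forcing |M| < t + 1, which contradicts |M| \<ge> max 2 (2t).\<close>

lemma exists_other_elem:
  assumes "finite A" "2 \<le> card A" "a \<in> A"
  shows "\<exists>b\<in>A. b \<noteq> a"
proof -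
  have "card (A - {a}) \<noteq> 0" using assms card.remove[OF assms(1,3)] by linarith
  then show ?thesis by (metis card.empty ex_in_conv DiffE singletonI)
qed

lemma adj_commute: "adj E a b \<longleftrightarrow> adj E b a"
  by (auto simp: adj_def insert_commute)

lemma adj_del_verts_E: "adj (del_verts_E E S) a b \<longleftrightarrow> adj E a b \<and> a \<notin> S \<and> b \<notin> S"
  by (auto simp: adj_def del_verts_E_def)

lemma adj_del_verts_E_Diff:
  "adj (del_verts_E (E - {e}) S) a b \<longleftrightarrow> adj E a b \<and> {a, b} \<noteq> e \<and> a \<notin> S \<and> b \<notin> S"
  by (auto simp: adj_def del_verts_E_def)

lemma adj_in_verts:
  assumes "graph V E" "adj E a b"
  shows "a \<in> V" "b \<in> V"
proof -
  obtain u v where "{a, b} = {u, v}" "u \<in> V" "v \<in> V"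
    using assms unfolding graph_def adj_def by blast
  then show "a \<in> V" "b \<in> V" by (auto simp: doubleton_eq_iff)
qed

subsection \<open>Connected components\<close>

lemma equiv_conn_rel: "equiv V (conn_rel V E)"
proof -
  let ?B = "{(u, v). u \<in> V \<and> v \<in> V \<and> adj E u v}"
  have "sym (?B\<^sup>*)" by (rule sym_rtrancl) (auto simp: sym_def adj_commute)
  then show ?thesis
    unfolding equiv_def conn_rel_def refl_on_def sym_def trans_def
    by (auto intro: rtrancl_trans)
qed

lemma conn_rel_refl: "a \<in> V \<Longrightarrow> (a, a) \<in> conn_rel V E"
  unfolding conn_rel_def by auto

lemma conn_rel_sym: "(a, b) \<in> conn_rel V E \<Longrightarrow> (b, a) \<in> conn_rel V E"
  using equiv_conn_rel[of V E] unfolding equiv_def sym_def by blast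

lemma conn_rel_trans: "(a, b) \<in> conn_rel V E \<Longrightarrow> (b, c) \<in> conn_rel V E \<Longrightarrow> (a, c) \<in> conn_rel V E"
  using equiv_conn_rel[of V E] unfolding equiv_def trans_def by blast

lemma conn_rel_adj: "a \<in> V \<Longrightarrow> b \<in> V \<Longrightarrow> adj E a b \<Longrightarrow> (a, b) \<in> conn_rel V E"
  unfolding conn_rel_def by auto

lemma conn_rel_isolated:
  assumes "(y, z) \<in> conn_rel V E" "\<forall>b\<in>V. \<not> adj E y b"
  shows "z = y"
proof -
  have "(y, z) \<in> {(u, v). u \<in> V \<and> v \<in> V \<and> adj E u v}\<^sup>*"
    using assms(1) by (simp add: conn_rel_def)
  then show ?thesis using assms(2) by (cases rule: converse_rtranclE) auto
qed

lemma card_le_ncomp: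
  assumes "finite V" "R \<subseteq> V"
    and "\<And>a b. a \<in> R \<Longrightarrow> b \<in> R \<Longrightarrow> a \<noteq> b \<Longrightarrow> (a, b) \<notin> conn_rel V E"
  shows "card R \<le> ncomp V E"
proof -
  let ?r = "conn_rel V E"
  have "inj_on (\<lambda>a. ?r `` {a}) R"
  proof (rule inj_onI)
    fix a b assume "a \<in> R" "b \<in> R" "?r `` {a} = ?r `` {b}"
    then have "(a, b) \<in> ?r" using eq_equiv_class_iff[OF equiv_conn_rel[of V E]] assms(2) by blast
    then show "a = b" using assms(3) \<open>a \<in> R\<close> \<open>b \<in> R\<close> by blast
  qed
  moreover have "(\<lambda>a. ?r `` {a}) ` R \<subseteq> V // ?r" using assms(2) by (auto intro: quotientI)
  moreover have "finite (V // ?r)"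
    using finite_quotient[OF assms(1) equiv_type[OF equiv_conn_rel[of V E]]] .
  ultimately show ?thesis unfolding ncomp_def by (rule card_inj_on_le)
qed

lemma ncomp_le_card:
  assumes "finite R" "\<And>v. v \<in> V \<Longrightarrow> \<exists>r\<in>R. (v, r) \<in> conn_rel V E"
  shows "ncomp V E \<le> card R"
proof -
  let ?r = "conn_rel V E"
  have "V // ?r \<subseteq> (\<lambda>a. ?r `` {a}) ` R"
  proof
    fix X assume "X \<in> V // ?r"
    then obtain v where v: "X = ?r `` {v}" "v \<in> V" by (rule quotientE)
    then obtain r where r: "r \<in> R" "(v, r) \<in> ?r" using assms(2) by blast
    have "?r `` {v} = ?r `` {r}" using equiv_class_eq[OF equiv_conn_rel r(2)] .
    then show "X \<in> (\<lambda>a. ?r `` {a}) ` R" using v r by blast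
  qed
  then have "card (V // ?r) \<le> card ((\<lambda>a. ?r `` {a}) ` R)"
    using assms(1) by (intro card_mono) auto
  also have "\<dots> \<le> card R" by (rule card_image_le[OF assms(1)])
  finally show ?thesis unfolding ncomp_def .
qed

lemma card_isolated_less_ncomp:
  assumes "finite V" "Y \<subseteq> V" "a \<in> V" "a \<notin> Y"
    and "\<And>y b. y \<in> Y \<Longrightarrow> b \<in> V \<Longrightarrow> \<not> adj E y b"
  shows "card Y + 1 \<le> ncomp V E"
proof -
  have "card (insert a Y) \<le> ncomp V E"
  proof (rule card_le_ncomp[OF assms(1)])
    show "insert a Y \<subseteq> V" using assms(2,3) by auto
    fix c d assume cd: "c \<in> insert a Y" "d \<in> insert a Y" "c \<noteq> d"
    show "(c, d) \<notin> conn_rel V E"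
    proof
      assume cd_conn: "(c, d) \<in> conn_rel V E"
      show False
      proof (cases "c \<in> Y")
        case True
        then show False using conn_rel_isolated[OF cd_conn] assms(5) cd(3) by blast
      next
        case False
        then have "d \<in> Y" using cd by auto
        then show False
          using conn_rel_isolated[OF conn_rel_sym[OF cd_conn]] assms(5) cd(3) by blast
      qed
    qed
  qed
  then show ?thesis using finite_subset[OF assms(2,1)] assms(4) by simp
qed

lemma conn_rel_del_edge_eq:
  assumes "u \<in> S \<or> w \<in> S \<or> (u, w) \<in> conn_rel (V - S) (del_verts_E (E - {{u, w}}) S)"
  shows "conn_rel (V - S) (del_verts_E (E - {{u, w}}) S) = conn_rel (V - S) (del_verts_E E S)"
proof -
  let ?B1 = "{(a, b). a \<in> V - S \<and> b \<in> V - S \<and> adj (del_verts_E (E - {{u, w}}) S) a b}"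
  let ?B2 = "{(a, b). a \<in> V - S \<and> b \<in> V - S \<and> adj (del_verts_E E S) a b}"
  have "?B1 \<subseteq> ?B2" by (auto simp: adj_def del_verts_E_def)
  moreover have "?B2 \<subseteq> ?B1\<^sup>*"
  proof
    fix p assume "p \<in> ?B2"
    then obtain a b where p: "p = (a, b)" "a \<in> V - S" "b \<in> V - S" "adj E a b"
      by (auto simp: adj_del_verts_E)
    show "p \<in> ?B1\<^sup>*"
    proof (cases "{a, b} = {u, w}")
      case False
      then show ?thesis using p by (auto simp: adj_del_verts_E_Diff)
    next
      case True
      \<comment> \<open>the deleted edge uw is replaced by a path from u to w avoiding it\<close>
      then have "u \<notin> S" "w \<notin> S" using p by (auto simp: doubleton_eq_iff)
      then have "(u, w) \<in> conn_rel (V - S) (del_verts_E (E - {{u, w}}) S)" using assms by simp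
      then have "(u, w) \<in> ?B1\<^sup>*" "(w, u) \<in> ?B1\<^sup>*"
        using conn_rel_sym[of u w] unfolding conn_rel_def by blast+
      moreover have "(a = u \<and> b = w) \<or> (a = w \<and> b = u)"
        using True by (auto simp: doubleton_eq_iff)
      ultimately show ?thesis using p(1) by blast
    qed
  qed
  ultimately have "?B2\<^sup>* = ?B1\<^sup>*" by (rule rtrancl_subset)
  then show ?thesis by (simp add: conn_rel_def)
qed

subsection \<open>Toughness\<close>

lemma finite_cutsets: "finite V \<Longrightarrow> finite {S. cutset V E S}"
  by (rule finite_subset[of _ "Pow V"]) (auto simp: cutset_def)

lemma toughness_cutset_bound:
  assumes "finite V" "toughness V E = ereal t" "cutset V E S"
  shows "t * real (ncomp (V - S) (del_verts_E E S)) \<le> real (card S)"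
proof -
  let ?f = "\<lambda>S. real (card S) / real (ncomp (del_verts_V V S) (del_verts_E E S))"
  have "finite {?f S | S. cutset V E S}"
    using finite_imageI[OF finite_cutsets[OF assms(1)], of ?f] by (simp add: image_Collect)
  then have "Min {?f S | S. cutset V E S} \<le> ?f S" using assms(3) by (intro Min_le) auto
  moreover have "Min {?f S | S. cutset V E S} = t"
    using assms(2,3) by (auto simp: toughness_def split: if_splits)
  moreover have "ncomp (V - S) (del_verts_E E S) \<ge> 2"
    using assms(3) by (simp add: cutset_def del_verts_V_def)
  ultimately show ?thesis by (simp add: del_verts_V_def pos_le_divide_eq)
qed

lemma toughness_less_obtains_cutset:
  assumes "finite V" "toughness V E < ereal t"
  obtains S where "cutset V E S" "real (card S) < t * real (ncomp (V - S) (del_verts_E E S))"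
proof -
  let ?f = "\<lambda>S. real (card S) / real (ncomp (del_verts_V V S) (del_verts_E E S))"
  have ex: "\<exists>S. cutset V E S" using assms(2) by (auto simp: toughness_def split: if_splits)
  have "finite {?f S | S. cutset V E S}"
    using finite_imageI[OF finite_cutsets[OF assms(1)], of ?f] by (simp add: image_Collect)
  then have "Min {?f S | S. cutset V E S} \<in> {?f S | S. cutset V E S}"
    using ex by (intro Min_in) auto
  then obtain S where S: "cutset V E S" "?f S = Min {?f S | S. cutset V E S}" by auto
  then have "?f S < t" using assms(2) ex by (simp add: toughness_def)
  moreover have "ncomp (V - S) (del_verts_E E S) \<ge> 2"
    using S(1) by (simp add: cutset_def del_verts_V_def)
  ultimately show ?thesis
    using that S(1) by (simp add: del_verts_V_def pos_divide_less_eq mult.commute)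
qed

lemma isolating_cutset_bound:
  assumes "finite V" "toughness V E = ereal t" "t > 0"
    and "T \<subseteq> V" "Y \<subseteq> V - T" "a \<in> V - T" "a \<notin> Y" "Y \<noteq> {}"
    and "\<And>y c. y \<in> Y \<Longrightarrow> adj E y c \<Longrightarrow> c \<in> T"
  shows "t * (real (card Y) + 1) \<le> real (card T)"
proof -
  have nc: "card Y + 1 \<le> ncomp (V - T) (del_verts_E E T)"
    using assms(1,5,6,7,9) by (intro card_isolated_less_ncomp) (auto simp: adj_del_verts_E)
  have "card Y \<ge> 1"
    using finite_subset[OF assms(5)] assms(1,8) by (simp add: Suc_leI card_gt_0_iff)
  then have "cutset V E T" using nc assms(4) by (simp add: cutset_def del_verts_V_def)
  have "t * (real (card Y) + 1) \<le> t * real (ncomp (V - T) (del_verts_E E T))"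
    using nc assms(3) by (intro mult_left_mono) auto
  also have "\<dots> \<le> real (card T)" by (rule toughness_cutset_bound) fact+
  finally show ?thesis .
qed

lemma no_cutset_if_complete:
  assumes "\<And>a b. a \<in> V \<Longrightarrow> b \<in> V \<Longrightarrow> a \<noteq> b \<Longrightarrow> adj E a b"
  shows "\<not> cutset V E S"
proof -
  have "ncomp (V - S) (del_verts_E E S) \<le> 1"
  proof (cases "V - S = {}")
    case True
    then show ?thesis unfolding ncomp_def True by (simp add: quotient_def)
  next
    case False
    then obtain v0 where v0: "v0 \<in> V - S" by blast
    have "ncomp (V - S) (del_verts_E E S) \<le> card {v0}"
    proof (rule ncomp_le_card)
      fix v assume v: "v \<in> V - S"
      have "(v, v0) \<in> conn_rel (V - S) (del_verts_E E S)"
        using v v0 assms conn_rel_refl[OF v] by (cases "v = v0") (auto intro: conn_rel_adj simp: adj_del_verts_E)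
      then show "\<exists>r\<in>{v0}. (v, r) \<in> conn_rel (V - S) (del_verts_E E S)" by blast
    qed simp
    then show ?thesis by simp
  qed
  then show ?thesis by (simp add: cutset_def del_verts_V_def)
qed

lemma toughness_finite_obtains_nonadjacent:
  assumes "toughness V E = ereal t"
  obtains a b where "a \<in> V" "b \<in> V" "a \<noteq> b" "\<not> adj E a b"
proof -
  have "\<exists>S. cutset V E S" using assms by (auto simp: toughness_def split: if_splits)
  then show ?thesis using that no_cutset_if_complete by metis
qed

definition neighbourhood :: "'a set \<Rightarrow> 'a set set \<Rightarrow> 'a \<Rightarrow> 'a set" where
  "neighbourhood V E x = {c \<in> V. adj E x c}"

lemma card_neighbourhood_ge:
  assumes "graph V E" "toughness V E = ereal t" "t > 0"
    and "x \<in> V" "z \<in> V" "z \<noteq> x" "\<not> adj E x z"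
  shows "2 * t \<le> real (card (neighbourhood V E x))"
proof -
  have "t * (real (card {x}) + 1) \<le> real (card (neighbourhood V E x))"
    using assms adj_in_verts[OF assms(1)]
    by (intro isolating_cutset_bound[where a = z]) (auto simp: graph_def neighbourhood_def adj_def)
  then show ?thesis by simp
qed

lemma critical_edge_separates:
  assumes "finite V" "toughness V E = ereal t" "toughness V (E - {{u, w}}) < ereal t"
  obtains S where "S \<subseteq> V" "u \<notin> S" "w \<notin> S"
    "(u, w) \<notin> conn_rel (V - S) (del_verts_E (E - {{u, w}}) S)"
    "real (card S) < t * real (ncomp (V - S) (del_verts_E (E - {{u, w}}) S))"
proof -
  obtain S where S: "cutset V (E - {{u, w}}) S"
    and small: "real (card S) < t * real (ncomp (V - S) (del_verts_E (E - {{u, w}}) S))"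
    using toughness_less_obtains_cutset[OF assms(1,3)] by blast
  have "u \<notin> S \<and> w \<notin> S \<and> (u, w) \<notin> conn_rel (V - S) (del_verts_E (E - {{u, w}}) S)"
  proof (rule ccontr)
    assume "\<not> ?thesis"
    \<comment> \<open>then S is a cutset of G with the same components\<close>
    then have "ncomp (V - S) (del_verts_E (E - {{u, w}}) S) = ncomp (V - S) (del_verts_E E S)"
      using conn_rel_del_edge_eq[of u S w V E] by (auto simp: ncomp_def)
    moreover from this have "cutset V E S" using S by (simp add: cutset_def del_verts_V_def)
    ultimately show False
      using toughness_cutset_bound[OF assms(1,2)] small by fastforce
  qed
  then show ?thesis using that S small by (auto simp: cutset_def)
qed

subsection \<open>Split graphs of toughness t\<close>

locale split_graph_tough =
  fixes t :: real and V :: "'a set" and E :: "'a set set" and K I :: "'a set"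
  assumes t_pos: "t > 0" and graph: "graph V E"
    and partition: "K \<union> I = V" "K \<inter> I = {}"
    and clique: "clique E K" and independent: "independent E I"
    and toughness: "toughness V E = ereal t"
begin

lemma finite_V: "finite V"
  using graph by (simp add: graph_def)

lemma finite_K: "finite K" and finite_I: "finite I"
  using finite_V partition(1) by auto

lemma adj_clique: "a \<in> K \<Longrightarrow> b \<in> K \<Longrightarrow> a \<noteq> b \<Longrightarrow> adj E a b"
  using clique by (auto simp: clique_def adj_def)

lemma adj_independent_in_K:
  assumes "y \<in> I" "adj E y c"
  shows "c \<in> K"
proof -
  have "c \<notin> I" using assms independent by (auto simp: independent_def adj_def)
  then show ?thesis using adj_in_verts(2)[OF graph assms(2)] partition(1) by blast
qed

lemma neighbourhood_subset_K: "x \<in> I \<Longrightarrow> neighbourhood V E x \<subseteq> K"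
  using adj_independent_in_K by (auto simp: neighbourhood_def)

lemma obtains_nonadjacent_in_I:
  obtains x z where "x \<in> I" "z \<in> V" "z \<noteq> x" "\<not> adj E x z"
proof -
  obtain a b where ab: "a \<in> V" "b \<in> V" "a \<noteq> b" "\<not> adj E a b"
    using toughness_finite_obtains_nonadjacent[OF toughness] .
  then have "a \<in> I \<or> b \<in> I" using adj_clique partition(1) by blast
  then show ?thesis using that ab adj_commute[of E a b] by metis
qed

lemma independent_isolated_bound:
  assumes "x \<in> I" "2 \<le> card I" "T \<subseteq> K"
    and "\<And>y c. y \<in> I - {x} \<Longrightarrow> adj E y c \<Longrightarrow> c \<in> T"
  shows "t * real (card I) \<le> real (card T)"
proof -
  have "card (I - {x}) + 1 = card I" using card.remove[OF finite_I assms(1)] by simp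
  moreover have "I - {x} \<noteq> {}"
  proof
    assume "I - {x} = {}"
    with calculation assms(2) show False by simp
  qed
  ultimately show ?thesis
    using isolating_cutset_bound[OF finite_V toughness t_pos, of T "I - {x}" x] assms partition
    by fastforce
qed

end

locale separated_pair = split_graph_tough +
  fixes x z u w :: 'a and S :: "'a set"
  assumes x_in_I: "x \<in> I"
    and nonadjacent: "z \<in> V" "z \<noteq> x" "\<not> adj E x z"
    and adj_x: "adj E x u" "adj E x w" and u_ne_w: "u \<noteq> w"
    and cut: "S \<subseteq> V" "u \<notin> S" "w \<notin> S"
    and separated: "(u, w) \<notin> conn_rel (V - S) (del_verts_E (E - {{u, w}}) S)"
    and cut_small: "real (card S) < t * real (ncomp (V - S) (del_verts_E (E - {{u, w}}) S))"
begin

abbreviation E_del :: "'a set set" where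
  "E_del \<equiv> del_verts_E (E - {{u, w}}) S"

definition I_u :: "'a set" where "I_u = {y \<in> I - S. adj E u y}"
definition I_w :: "'a set" where "I_w = {y \<in> I - S. adj E w y}"
definition I_rest :: "'a set" where "I_rest = I - S - I_u - I_w"

lemma u_in_K: "u \<in> K" and w_in_K: "w \<in> K"
  using adj_independent_in_K[OF x_in_I] adj_x by auto

lemma u_in_V: "u \<in> V" and w_in_V: "w \<in> V"
  using u_in_K w_in_K partition(1) by auto

lemma card_cut_less: "ncomp (V - S) E_del \<le> n \<Longrightarrow> real (card S) < t * real n"
  using cut_small t_pos by (smt (verit) mult_left_mono of_nat_le_iff)

lemma common_neighbour_in_cut:
  assumes "adj E u c" "adj E w c"
  shows "c \<in> S"
proof (rule ccontr)
  assume c: "c \<notin> S"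
  have cV: "c \<in> V" using adj_in_verts(2)[OF graph assms(1)] .
  have "u \<noteq> c" "w \<noteq> c" using assms by (auto simp: adj_def)
  then have "adj E_del u c" "adj E_del c w"
    using assms c cut adj_commute[of E c w] by (auto simp: adj_del_verts_E_Diff doubleton_eq_iff)
  then have "(u, c) \<in> conn_rel (V - S) E_del" "(c, w) \<in> conn_rel (V - S) E_del"
    using cV c cut u_in_V w_in_V by (auto intro: conn_rel_adj)
  then show False using separated conn_rel_trans[of u c] by blast
qed

lemma clique_minus_pair_subset_cut: "K - {u, w} \<subseteq> S"
proof
  fix c assume "c \<in> K - {u, w}"
  then show "c \<in> S"
    using adj_clique[OF u_in_K] adj_clique[OF w_in_K] common_neighbour_in_cut by blast
qed

lemma x_in_cut: "x \<in> S"
  using common_neighbour_in_cut adj_x adj_commute by metis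

lemma card_cut: "card S + 2 = card K + card (I \<inter> S)"
proof -
  have "S = (K - {u, w}) \<union> (I \<inter> S)"
    using clique_minus_pair_subset_cut cut partition by auto
  moreover have "card ((K - {u, w}) \<union> (I \<inter> S)) = card (K - {u, w}) + card (I \<inter> S)"
    by (rule card_Un_disjoint) (use finite_K finite_I partition(2) in auto)
  ultimately have "card S = card (K - {u, w}) + card (I \<inter> S)" by simp
  moreover have "card (K - {u, w}) + 2 = card K"
    using card_Diff_subset[of "{u, w}" K] card_mono[OF finite_K, of "{u, w}"] u_in_K w_in_K u_ne_w
    by simp
  ultimately show ?thesis by simp
qed

lemma card_I_diff_cut: "card (I - S) = card I_rest + card I_u + card I_w"
proof -
  have "I - S = I_rest \<union> (I_u \<union> I_w)" and "I_u \<inter> I_w = {}"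
    using common_neighbour_in_cut by (auto simp: I_rest_def I_u_def I_w_def)
  moreover have "finite I_rest" "finite I_u" "finite I_w"
    using finite_I by (auto simp: I_rest_def I_u_def I_w_def)
  moreover have "I_rest \<inter> (I_u \<union> I_w) = {}" by (auto simp: I_rest_def)
  ultimately show ?thesis by (simp add: card_Un_disjoint)
qed

text \<open>Every component of G - uw - S contains u, w or a vertex of I_rest.\<close>

lemma ncomp_le: "ncomp (V - S) E_del \<le> 2 + card I_rest"
proof -
  have "ncomp (V - S) E_del \<le> card ({u, w} \<union> I_rest)"
  proof (rule ncomp_le_card)
    show "finite ({u, w} \<union> I_rest)" using finite_I by (simp add: I_rest_def)
    fix v assume v: "v \<in> V - S"
    have "(v, v) \<in> conn_rel (V - S) E_del" using v by (rule conn_rel_refl)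
    moreover have "v \<notin> K \<or> v = u \<or> v = w" using v clique_minus_pair_subset_cut by blast
    moreover have "{v, u} \<noteq> {u, w}" "{v, w} \<noteq> {u, w}" if "v \<in> I"
      using that partition(2) u_in_K w_in_K by (auto simp: doubleton_eq_iff)
    moreover have "(v, u) \<in> conn_rel (V - S) E_del" if "v \<in> I_u"
      using that v cut u_in_V adj_commute[of E v u] \<open>v \<in> I \<Longrightarrow> {v, u} \<noteq> {u, w}\<close>
      by (intro conn_rel_adj) (auto simp: I_u_def adj_del_verts_E_Diff)
    moreover have "(v, w) \<in> conn_rel (V - S) E_del" if "v \<in> I_w"
      using that v cut w_in_V adj_commute[of E v w] \<open>v \<in> I \<Longrightarrow> {v, w} \<noteq> {u, w}\<close>
      by (intro conn_rel_adj) (auto simp: I_w_def adj_del_verts_E_Diff)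
    ultimately show "\<exists>r\<in>{u, w} \<union> I_rest. (v, r) \<in> conn_rel (V - S) E_del"
      using v partition(1) by (auto simp: I_rest_def)
  qed
  also have "\<dots> \<le> 2 + card I_rest"
    using card_Un_le[of "{u, w}" I_rest] card_insert_le_m1 by (simp add: u_ne_w)
  finally show ?thesis .
qed

lemma I_u_empty: "I_u = {}"
proof (rule ccontr)
  assume "I_u \<noteq> {}"
  then have "card I_u \<ge> 1" using finite_I by (simp add: I_u_def Suc_le_eq card_gt_0_iff)
  define Y where "Y = {y \<in> I. \<not> adj E w y}"
  have "I_rest \<union> I_u \<subseteq> Y" and "I_rest \<inter> I_u = {}"
    using common_neighbour_in_cut by (auto simp: Y_def I_rest_def I_u_def I_w_def)
  then have "card I_rest + card I_u \<le> card Y"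
    using finite_I card_mono[of Y "I_rest \<union> I_u"]
    by (simp add: Y_def I_rest_def I_u_def card_Un_disjoint)
  have "t * (real (card Y) + 1) \<le> real (card (K - {w}))"
  proof (rule isolating_cutset_bound[OF finite_V toughness t_pos, where a = w])
    show "Y \<noteq> {}" using \<open>card I_rest + card I_u \<le> card Y\<close> \<open>card I_u \<ge> 1\<close> by auto
    fix y c assume "y \<in> Y" "adj E y c"
    then show "c \<in> K - {w}" using adj_independent_in_K adj_commute[of E y w] by (auto simp: Y_def)
  qed (use partition w_in_K in \<open>auto simp: Y_def\<close>)
  moreover have "real (card S) < t * (real (card Y) + 1)"
  proof -
    have "ncomp (V - S) E_del \<le> card Y + 1"
      using ncomp_le \<open>card I_rest + card I_u \<le> card Y\<close> \<open>card I_u \<ge> 1\<close> by linarith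
    from card_cut_less[OF this] show ?thesis by (simp add: add.commute)
  qed
  moreover have "card (K - {w}) + 1 = card K" using card.remove[OF finite_K w_in_K] by simp
  moreover have "1 \<le> card (I \<inter> S)"
    using finite_I x_in_cut x_in_I by (auto simp: Suc_le_eq card_gt_0_iff)
  ultimately show False using card_cut by linarith
qed

lemma card_I_ge_2: "2 \<le> card I"
proof (rule ccontr)
  assume "\<not> 2 \<le> card I"
  then have I: "I = {x}" using x_in_I finite_I card_le_Suc0_iff_eq[OF finite_I] by force
  then have "I_rest = {}" "I \<inter> S = {x}" unfolding I_rest_def using x_in_cut by auto
  then have "real (card S) < t * 2" and "card S + 1 = card K"
    using card_cut_less[of 2] ncomp_le card_cut by auto
  moreover have "2 * t \<le> real (card (neighbourhood V E x))"
    using card_neighbourhood_ge[OF graph toughness t_pos _ nonadjacent] x_in_I partition(1) by blast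
  moreover have "neighbourhood V E x \<subseteq> K - {z}"
    using neighbourhood_subset_K[OF x_in_I] nonadjacent(3) by (auto simp: neighbourhood_def)
  then have "card (neighbourhood V E x) \<le> card (K - {z})" using finite_K by (intro card_mono) auto
  moreover have "z \<in> K" using nonadjacent(1,2) partition(1) I by blast
  then have "card (K - {z}) + 1 = card K" using card.remove[OF finite_K] by simp
  ultimately show False by linarith
qed

lemma I_inter_cut: "I \<inter> S = {x}"
proof -
  have card_I: "card I = card (I \<inter> S) + card (I - S)"
    by (rule card_Int_Diff[OF finite_I])
  have "card (I \<inter> S) \<le> 1"
  proof (rule ccontr)
    assume "\<not> card (I \<inter> S) \<le> 1"
    have "t * real (card I) \<le> real (card K)"
      using independent_isolated_bound[OF x_in_I card_I_ge_2] adj_independent_in_K by blast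
    moreover have "ncomp (V - S) E_del \<le> card I"
      using ncomp_le card_I_diff_cut card_I \<open>\<not> card (I \<inter> S) \<le> 1\<close> by linarith
    then have "real (card S) < t * real (card I)" by (rule card_cut_less)
    ultimately show False using card_cut \<open>\<not> card (I \<inter> S) \<le> 1\<close> by linarith
  qed
  then show ?thesis
    using x_in_I x_in_cut card_le_Suc0_iff_eq[of "I \<inter> S"] finite_I by auto
qed

lemma neighbours_in_I: "y \<in> I \<Longrightarrow> adj E u y \<Longrightarrow> y = x"
  using I_inter_cut I_u_empty by (auto simp: I_u_def)

lemma card_K_less: "real (card K) - 1 < t * (1 + real (card I))"
proof -
  have "ncomp (V - S) E_del \<le> 1 + card I"
    using ncomp_le card_I_diff_cut card_Int_Diff[OF finite_I, of S] I_inter_cut by simp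
  then have "real (card S) < t * (1 + real (card I))" using card_cut_less by fastforce
  then show ?thesis using card_cut I_inter_cut by simp
qed

end

context split_graph_tough
begin

lemma critical_pair:
  assumes "x \<in> I" "z \<in> V" "z \<noteq> x" "\<not> adj E x z"
    and "adj E x u" "adj E x w" "u \<noteq> w"
    and "toughness V (E - {{u, w}}) < ereal t"
  shows "2 \<le> card I \<and> (\<forall>y\<in>I. adj E u y \<longrightarrow> y = x)
    \<and> real (card K) - 1 < t * (1 + real (card I))"
proof -
  obtain S where "S \<subseteq> V" "u \<notin> S" "w \<notin> S"
    "(u, w) \<notin> conn_rel (V - S) (del_verts_E (E - {{u, w}}) S)"
    "real (card S) < t * real (ncomp (V - S) (del_verts_E (E - {{u, w}}) S))"
    using critical_edge_separates[OF finite_V toughness assms(8)] .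
  then interpret separated_pair t V E K I x z u w S
    using assms by unfold_locales auto
  show ?thesis using card_I_ge_2 neighbours_in_I card_K_less by blast
qed

lemma exists_noncritical_edge:
  assumes "t > 1/2"
  shows "\<exists>e\<in>E. ereal t \<le> toughness V (E - {e})"
proof (rule ccontr)
  assume "\<not> ?thesis"
  then have critical: "toughness V (E - {{u, w}}) < ereal t" if "{u, w} \<in> E" for u w
    using that by (auto simp: not_le)
  obtain x z where xz: "x \<in> I" "z \<in> V" "z \<noteq> x" "\<not> adj E x z"
    by (rule obtains_nonadjacent_in_I)
  define M where "M = neighbourhood V E x"
  have M_K: "M \<subseteq> K" using neighbourhood_subset_K[OF xz(1)] by (simp add: M_def)
  have finite_M: "finite M" using finite_subset[OF M_K finite_K] .
  have "2 * t \<le> real (card M)"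
    unfolding M_def using card_neighbourhood_ge[OF graph toughness t_pos _ xz(2-4)] xz(1) partition(1)
    by blast
  then have card_M: "2 \<le> card M" using assms by linarith
  have pair: "2 \<le> card I \<and> (\<forall>y\<in>I. adj E u y \<longrightarrow> y = x)
      \<and> real (card K) - 1 < t * (1 + real (card I))" if "u \<in> M" "w \<in> M" "u \<noteq> w" for u w
  proof -
    have "{u, w} \<in> E" using that M_K clique by (auto simp: clique_def)
    then show ?thesis
      using critical_pair[OF xz _ _ \<open>u \<noteq> w\<close> critical] that by (simp add: M_def neighbourhood_def)
  qed
  have only_x: "y = x" if uy: "u \<in> M" "y \<in> I" "adj E u y" for u y
  proof -
    obtain w where "w \<in> M" "w \<noteq> u" using exists_other_elem[OF finite_M card_M uy(1)] by blast
    then show ?thesis using pair[of u w] uy by auto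
  qed
  obtain u where "u \<in> M" using card_M by (metis card.empty ex_in_conv not_numeral_le_zero)
  then obtain w where "w \<in> M" "u \<noteq> w" using exists_other_elem[OF finite_M card_M] by metis
  have "2 \<le> card I" and K_less: "real (card K) - 1 < t * (1 + real (card I))"
    using pair[OF \<open>u \<in> M\<close> \<open>w \<in> M\<close> \<open>u \<noteq> w\<close>] by auto
  have "c \<in> K - M" if "y \<in> I - {x}" "adj E y c" for y c
    using adj_independent_in_K[of y c] only_x[of c y] that adj_commute[of E y c] by auto
  then have "t * real (card I) \<le> real (card (K - M))"
    using independent_isolated_bound[OF xz(1) \<open>2 \<le> card I\<close>, of "K - M"] by blast
  moreover have "card (K - M) + card M = card K"
    using card_Diff_subset[OF finite_M M_K] card_mono[OF finite_K M_K] by simp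
  moreover have "t * (1 + real (card I)) = t + t * real (card I)" by (simp add: algebra_simps)
  ultimately show False using K_less card_M \<open>2 * t \<le> real (card M)\<close> by linarith
qed

end

theorem mainTheorem5:
  fixes t :: real and V :: "'a set" and E :: "'a set set"
  assumes "t \<in> \<rat>" and "t > 1/2"
    and "graph V E" and "split_graph V E"
  shows "\<not> minimally_tough t V E"
proof
  assume "minimally_tough t V E"
  then have "toughness V E = ereal t" and critical: "\<forall>e\<in>E. toughness V (E - {e}) < ereal t"
    by (auto simp: minimally_tough_def)
  moreover obtain K I where "K \<union> I = V" "K \<inter> I = {}" "clique E K" "independent E I"
    using assms(4) by (auto simp: split_graph_def)
  ultimately interpret split_graph_tough t V E K I
    using assms(2,3) by unfold_locales auto
  show False using exists_noncritical_edge[OF assms(2)] critical by (auto simp: not_le[symmetric])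
qed

end
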